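(* Let $A$ be a unital $\Bbbk$-algebra which is a domain, and for $k=1,\dots,m$ let $\varphi_k$ be algebra automorphisms and $\partial_k$ locally nilpotent skew derivations of $A$ with respect to $\varphi_k$, such that $\partial_\ell\circ\varphi_k=q_{k\ell}\,\varphi_k\circ\partial_\ell$ for all $1\le k,\ell\le m$, where $\widehat{\mathbf q}=(q_{k\ell})$ is an $m\times m$ matrix over $\Bbbk^\times$ and each $q_{kk}$ is not a root of unity. Let $\varepsilon:A\to\Bbbk$ be an algebra homomorphism with $\varepsilon\circ\varphi_k=\varepsilon$ for all $k$. Let $A_{\mathbf q}$ be the $\Bbbk$-algebra generated by $t_1,\dots,t_m$ subject to $t_\ell t_k=q_{k\ell}t_kt_\ell$ for $k<\ell$. Then $$\Phi(x)=\sum_{a\in\mathbb Z_{\ge0}^m}\varepsilon\big(\partial_m^{(a_m)}\cdots\partial_1^{(a_1)}(x)\big)\,t_1^{a_1}\cdots t_m^{a_m}$$ (a finite sum) defines an algebra homomorphism $\Phi:A\to A_{\mathbf q}$.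
   Context: A skew derivation with respect to $\varphi$ is a linear map $\partial$ with $\partial(ab)=\partial(a)b+\varphi(a)\partial(b)$; locally nilpotent means every element is killed by some power. Divided powers: $\partial_k^{(n)}=\frac{1}{[n]_{q_{kk}}!}\partial_k^n$ with $[n]_r!=\prod_{\ell=1}^n\frac{1-r^\ell}{1-r}$. *)

theory Defs
  imports Complex_Main
begin

definition is_algebra :: "('k::field \<Rightarrow> 'a::ring_1 \<Rightarrow> 'a) \<Rightarrow> bool" where
  "is_algebra sc \<longleftrightarrow> module sc \<and>
     (\<forall>c x y. sc c (x * y) = sc c x * y \<and> sc c (x * y) = x * sc c y)"

definition is_linear_map :: "('k::field \<Rightarrow> 'a::ring_1 \<Rightarrow> 'a) \<Rightarrow> ('a \<Rightarrow> 'a) \<Rightarrow> bool" where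
  "is_linear_map sc f \<longleftrightarrow> (\<forall>x y. f (x + y) = f x + f y) \<and> (\<forall>c x. f (sc c x) = sc c (f x))"

definition is_algebra_automorphism :: "('k::field \<Rightarrow> 'a::ring_1 \<Rightarrow> 'a) \<Rightarrow> ('a \<Rightarrow> 'a) \<Rightarrow> bool" where
  "is_algebra_automorphism sc f \<longleftrightarrow> is_linear_map sc f \<and> (\<forall>x y. f (x * y) = f x * f y)
     \<and> f 1 = 1 \<and> bij f"

definition is_skew_derivation :: "('k::field \<Rightarrow> 'a::ring_1 \<Rightarrow> 'a) \<Rightarrow> ('a \<Rightarrow> 'a) \<Rightarrow> ('a \<Rightarrow> 'a) \<Rightarrow> bool" where
  "is_skew_derivation sc phi d \<longleftrightarrow> is_linear_map sc d \<and>
     (\<forall>a b. d (a * b) = d a * b + phi a * d b)"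

definition locally_nilpotent :: "('a::zero \<Rightarrow> 'a) \<Rightarrow> bool" where
  "locally_nilpotent d \<longleftrightarrow> (\<forall>x. \<exists>n. (d ^^ n) x = 0)"

definition is_algebra_hom_to_field :: "('k::field \<Rightarrow> 'a::ring_1 \<Rightarrow> 'a) \<Rightarrow> ('a \<Rightarrow> 'k) \<Rightarrow> bool" where
  "is_algebra_hom_to_field sc e \<longleftrightarrow> (\<forall>x y. e (x + y) = e x + e y) \<and> (\<forall>c x. e (sc c x) = c * e x)
     \<and> (\<forall>x y. e (x * y) = e x * e y) \<and> e 1 = 1"

definition qfact :: "'k::field \<Rightarrow> nat \<Rightarrow> 'k" where
  "qfact r n = (\<Prod>l = 1..n. (1 - r ^ l) / (1 - r))"

definition divided_power :: "('k::field \<Rightarrow> 'a::ring_1 \<Rightarrow> 'a) \<Rightarrow> 'k \<Rightarrow> ('a \<Rightarrow> 'a) \<Rightarrow> nat \<Rightarrow> 'a \<Rightarrow> 'a" where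
  "divided_power sc r d n x = sc (inverse (qfact r n)) ((d ^^ n) x)"

text \<open>\<open>iter_divided sc q D m a x\<close> = D_m^(a_m) ( ... (D_1^(a_1) x)); D_1 is applied first.\<close>
definition iter_divided :: "('k::field \<Rightarrow> 'a::ring_1 \<Rightarrow> 'a) \<Rightarrow> (nat \<Rightarrow> nat \<Rightarrow> 'k) \<Rightarrow> (nat \<Rightarrow> 'a \<Rightarrow> 'a)
     \<Rightarrow> nat \<Rightarrow> (nat \<Rightarrow> nat) \<Rightarrow> 'a \<Rightarrow> 'a" where
  "iter_divided sc q D m a x = fold (\<lambda>k y. divided_power sc (q k k) (D k) (a k) y) [1..<Suc m] x"

text \<open>Elements of the free k-algebra k<t_1,t_2,...> are finitely supported functions
  from words (lists of generator indices) to k.\<close>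
definition fin_supp :: "(nat list \<Rightarrow> 'k::zero) \<Rightarrow> bool" where
  "fin_supp f \<longleftrightarrow> finite {w. f w \<noteq> 0}"

definition fa_add :: "(nat list \<Rightarrow> 'k::field) \<Rightarrow> (nat list \<Rightarrow> 'k) \<Rightarrow> nat list \<Rightarrow> 'k" where
  "fa_add f g = (\<lambda>w. f w + g w)"

definition fa_diff :: "(nat list \<Rightarrow> 'k::field) \<Rightarrow> (nat list \<Rightarrow> 'k) \<Rightarrow> nat list \<Rightarrow> 'k" where
  "fa_diff f g = (\<lambda>w. f w - g w)"

definition fa_scale :: "'k::field \<Rightarrow> (nat list \<Rightarrow> 'k) \<Rightarrow> nat list \<Rightarrow> 'k" where
  "fa_scale c f = (\<lambda>w. c * f w)"

definition fa_mul :: "(nat list \<Rightarrow> 'k::field) \<Rightarrow> (nat list \<Rightarrow> 'k) \<Rightarrow> nat list \<Rightarrow> 'k" where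
  "fa_mul f g = (\<lambda>w. \<Sum>i\<le>length w. f (take i w) * g (drop i w))"

definition fa_one :: "nat list \<Rightarrow> 'k::field" where
  "fa_one = (\<lambda>w. if w = [] then 1 else 0)"

definition fa_word :: "nat list \<Rightarrow> nat list \<Rightarrow> 'k::field" where
  "fa_word u = (\<lambda>w. if w = u then 1 else 0)"

definition qrel :: "(nat \<Rightarrow> nat \<Rightarrow> 'k::field) \<Rightarrow> nat \<Rightarrow> nat \<Rightarrow> nat list \<Rightarrow> 'k" where
  "qrel q k l = fa_diff (fa_word [l, k]) (fa_scale (q k l) (fa_word [k, l]))"

inductive_set qideal :: "(nat \<Rightarrow> nat \<Rightarrow> 'k::field) \<Rightarrow> nat \<Rightarrow> (nat list \<Rightarrow> 'k) set"
  for q :: "nat \<Rightarrow> nat \<Rightarrow> 'k" and m :: nat where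
  gen: "1 \<le> k \<Longrightarrow> k < l \<Longrightarrow> l \<le> m \<Longrightarrow> qrel q k l \<in> qideal q m"
| zero: "(\<lambda>w. 0) \<in> qideal q m"
| add: "f \<in> qideal q m \<Longrightarrow> g \<in> qideal q m \<Longrightarrow> fa_add f g \<in> qideal q m"
| lmul: "f \<in> qideal q m \<Longrightarrow> fin_supp g \<Longrightarrow> fa_mul g f \<in> qideal q m"
| rmul: "f \<in> qideal q m \<Longrightarrow> fin_supp g \<Longrightarrow> fa_mul f g \<in> qideal q m"

text \<open>Equality in A_q = free algebra on t_1..t_m modulo the ideal.\<close>
definition qeq :: "(nat \<Rightarrow> nat \<Rightarrow> 'k::field) \<Rightarrow> nat \<Rightarrow> (nat list \<Rightarrow> 'k) \<Rightarrow> (nat list \<Rightarrow> 'k) \<Rightarrow> bool" where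
  "qeq q m f g \<longleftrightarrow> fa_diff f g \<in> qideal q m"

text \<open>Words t_1^{a_1}...t_m^{a_m} are exactly the sorted words over {1..m};
  the exponent a_i is the number of occurrences of i.\<close>
definition Phi :: "('k::field \<Rightarrow> 'a::ring_1 \<Rightarrow> 'a) \<Rightarrow> (nat \<Rightarrow> nat \<Rightarrow> 'k) \<Rightarrow> (nat \<Rightarrow> 'a \<Rightarrow> 'a)
     \<Rightarrow> ('a \<Rightarrow> 'k) \<Rightarrow> nat \<Rightarrow> 'a \<Rightarrow> nat list \<Rightarrow> 'k" where
  "Phi sc q D e m x = (\<lambda>w. if sorted w \<and> set w \<subseteq> {1..m}
       then e (iter_divided sc q D m (count_list w) x) else 0)"

end

theory Submission
  imports Defs "HOL-Library.Multiset"
begin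

text \<open>In \<open>A\<^sub>q\<close> every product of two ordered monomials \<open>t\<^sup>u t\<^sup>v\<close> equals a scalar multiple of the
  ordered monomial \<open>t\<^sup>u\<^sup>+\<^sup>v\<close>, the scalar being \<open>\<Prod>\<^sub>k\<^sub><\<^sub>l q\<^sub>k\<^sub>l\<^bsup>v\<^sub>k u\<^sub>l\<^esup>\<close>.
  On the algebra side, the \<open>q\<close>-Leibniz rule
  \<open>\<partial>\<^bsup>(n)\<^esup>(xy) = \<Sum>\<^sub>i \<phi>\<^sup>i(\<partial>\<^bsup>(n-i)\<^esup>x) \<partial>\<^bsup>(i)\<^esup>y\<close> for each \<open>\<partial>\<^sub>k\<close>, applied along \<open>\<partial>\<^sub>1, \<dots>, \<partial>\<^sub>m\<close>, forces every
  later \<open>\<partial>\<^sub>l\<^bsup>(n)\<^esup>\<close> past the powers \<open>\<phi>\<^sub>k\<^sup>i\<close> already produced, at the cost \<open>q\<^sub>k\<^sub>l\<^bsup>in\<^esup>\<close>. Hence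
  \<open>\<partial>\<^bsup>(a)\<^esup>(xy)\<close> is a sum over \<open>j \<le> a\<close> with exactly the same scalars, and applying \<open>\<epsilon>\<close>, which is
  invariant under all \<open>\<phi>\<^sub>k\<close>, turns it into the coefficient of \<open>t\<^sup>a\<close> in \<open>\<Phi>(x)\<Phi>(y)\<close>.
  Local nilpotency makes \<open>\<Phi>(x)\<close> finitely supported.\<close>

section \<open>Sorted words and exponent vectors\<close>

fun monomial_word :: "nat \<Rightarrow> (nat \<Rightarrow> nat) \<Rightarrow> nat list" where
  "monomial_word 0 c = []"
| "monomial_word (Suc r) c = monomial_word r c @ replicate (c (Suc r)) (Suc r)"

definition sorted_words :: "nat \<Rightarrow> nat list set" where
  "sorted_words m = {w. sorted w \<and> set w \<subseteq> {1..m}}"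

definition exponents_le :: "nat \<Rightarrow> (nat \<Rightarrow> nat) \<Rightarrow> (nat \<Rightarrow> nat) set" where
  "exponents_le r a = {j. \<forall>k. j k \<le> a k \<and> (k \<notin> {1..r} \<longrightarrow> j k = 0)}"

lemma count_list_replicate: "count_list (replicate n x) y = (if x = y then n else 0)"
  by (induction n) auto

lemma count_list_sort: "count_list (sort xs) x = count_list xs x"
  by (simp add: count_mset[symmetric])

lemma mset_eq_if_count_list_eq: "(\<And>x. count_list xs x = count_list ys x) \<Longrightarrow> mset xs = mset ys"
  by (simp add: multiset_eq_iff count_mset)

lemma set_monomial_word: "set (monomial_word r c) \<subseteq> {1..r}"
  by (induction r) auto

lemma sorted_monomial_word: "sorted (monomial_word r c)"
proof (induction r)
  case (Suc r)
  then show ?case using set_monomial_word[of r c] by (auto simp: sorted_append)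
qed simp

lemma monomial_word_in_sorted_words: "r \<le> m \<Longrightarrow> monomial_word r c \<in> sorted_words m"
  using set_monomial_word[of r c] sorted_monomial_word[of r c] by (auto simp: sorted_words_def)

lemma count_list_monomial_word:
  "count_list (monomial_word r c) k = (if k \<in> {1..r} then c k else 0)"
  by (induction r) (auto simp: count_list_replicate)

lemma monomial_word_count_list:
  assumes "w \<in> sorted_words r"
  shows "monomial_word r (count_list w) = w"
proof -
  have "mset (monomial_word r (count_list w)) = mset w"
    using assms by (intro mset_eq_if_count_list_eq)
      (auto simp: count_list_monomial_word sorted_words_def count_list_0_iff)
  then have "sort w = monomial_word r (count_list w)"
    by (intro properties_for_sort sorted_monomial_word)
  then show ?thesis using assms by (simp add: sorted_words_def sorted_sort_id)
qed

lemma sort_append_sorted_words: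
  "u \<in> sorted_words m \<Longrightarrow> v \<in> sorted_words m \<Longrightarrow> sort (u @ v) \<in> sorted_words m"
  unfolding sorted_words_def by auto

lemma finite_exponents_le: "finite (exponents_le r a)"
proof -
  define M where "M = Max (a ` {1..r})"
  have "exponents_le r a \<subseteq> {f. \<forall>x. (x \<in> {1..r} \<longrightarrow> f x \<in> {0..M}) \<and> (x \<notin> {1..r} \<longrightarrow> f x = 0)}"
  proof
    fix j assume j: "j \<in> exponents_le r a"
    have "j x \<le> M" if "x \<in> {1..r}" for x
      using j that Max_ge[of "a ` {1..r}" "a x"] unfolding exponents_le_def M_def
      by (auto intro: le_trans)
    then show "j \<in> {f. \<forall>x. (x \<in> {1..r} \<longrightarrow> f x \<in> {0..M}) \<and> (x \<notin> {1..r} \<longrightarrow> f x = 0)}"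
      using j unfolding exponents_le_def by auto
  qed
  then show ?thesis
    using finite_set_of_finite_funs[of "{1..r}" "{0..M}" 0] by (auto intro: finite_subset)
qed

lemma exponents_le_0: "exponents_le 0 a = {\<lambda>k. 0}"
  unfolding exponents_le_def by auto

lemma exponents_le_Suc:
  "exponents_le (Suc r) a = (\<lambda>(j, i). j(Suc r := i)) ` (exponents_le r a \<times> {..a (Suc r)})"
proof
  show "exponents_le (Suc r) a \<subseteq> (\<lambda>(j, i). j(Suc r := i)) ` (exponents_le r a \<times> {..a (Suc r)})"
  proof
    fix j assume "j \<in> exponents_le (Suc r) a"
    then have "(j(Suc r := 0), j (Suc r)) \<in> exponents_le r a \<times> {..a (Suc r)}"
      unfolding exponents_le_def by auto
    moreover have "j = (\<lambda>(j, i). j(Suc r := i)) (j(Suc r := 0), j (Suc r))" by auto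
    ultimately show "j \<in> (\<lambda>(j, i). j(Suc r := i)) ` (exponents_le r a \<times> {..a (Suc r)})" by blast
  qed
qed (auto simp: exponents_le_def)

lemma inj_on_exponents_le_Suc:
  "inj_on (\<lambda>(j, i). j(Suc r := i)) (exponents_le r a \<times> {..a (Suc r)})"
proof (rule inj_onI, clarsimp)
  fix j i j' i'
  assume "j \<in> exponents_le r a" "j' \<in> exponents_le r a" and e: "j(Suc r := i) = j'(Suc r := i')"
  then have "j (Suc r) = 0" "j' (Suc r) = 0" unfolding exponents_le_def by auto
  moreover have "i = i'" using fun_cong[OF e, of "Suc r"] by simp
  moreover have "j k = j' k" if "k \<noteq> Suc r" for k using fun_cong[OF e, of k] that by simp
  ultimately show "j = j' \<and> i = i'" by (metis ext)
qed

section \<open>The quantum affine space\<close>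

lemma fa_mul_word_word: "fa_mul (fa_word u) (fa_word v) = fa_word (u @ v)"
proof
  fix w
  have split: "(take i w = u \<and> drop i w = v) \<longleftrightarrow> (i = length u \<and> w = u @ v)" if "i \<le> length w" for i
  proof
    assume h: "take i w = u \<and> drop i w = v"
    then have "w = u @ v" using append_take_drop_id[of i w] by simp
    moreover have "i = length u" using h that by auto
    ultimately show "i = length u \<and> w = u @ v" by simp
  qed simp
  have "fa_mul (fa_word u) (fa_word v) w = (\<Sum>i\<le>length w. if i = length u \<and> w = u @ v then 1 else 0)"
    unfolding fa_mul_def fa_word_def by (rule sum.cong) (use split in auto)
  also have "\<dots> = fa_word (u @ v) w"
    unfolding fa_word_def by (cases "w = u @ v") (auto simp: sum.delta)
  finally show "fa_mul (fa_word u) (fa_word v) w = fa_word (u @ v) w" .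
qed

lemma fa_mul_one_left: "fa_mul fa_one f = f"
proof
  fix w
  have "fa_mul fa_one f w = (\<Sum>i\<le>length w. if i = 0 then f w else 0)"
    unfolding fa_mul_def fa_one_def by (rule sum.cong) auto
  then show "fa_mul fa_one f w = f w" by simp
qed

lemma fa_mul_diff_left: "fa_mul (\<lambda>w. f w - g w) h = (\<lambda>w. fa_mul f h w - fa_mul g h w)"
  unfolding fa_mul_def by (auto simp: fun_eq_iff sum_subtractf algebra_simps)

lemma fa_mul_diff_right: "fa_mul h (\<lambda>w. f w - g w) = (\<lambda>w. fa_mul h f w - fa_mul h g w)"
  unfolding fa_mul_def by (auto simp: fun_eq_iff sum_subtractf algebra_simps)

lemma fa_mul_scale_left: "fa_mul (\<lambda>w. a * f w) h = (\<lambda>w. a * fa_mul f h w)"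
  unfolding fa_mul_def by (auto simp: fun_eq_iff sum_distrib_left algebra_simps)

lemma fa_mul_scale_right: "fa_mul h (\<lambda>w. a * f w) = (\<lambda>w. a * fa_mul h f w)"
  unfolding fa_mul_def by (auto simp: fun_eq_iff sum_distrib_left algebra_simps)

lemma fa_mul_sum_left: "fa_mul (\<lambda>w. \<Sum>i\<in>I. F i w) h = (\<lambda>w. \<Sum>i\<in>I. fa_mul (F i) h w)"
  unfolding fa_mul_def by (auto simp: fun_eq_iff sum_distrib_right intro: sum.swap)

lemma fa_mul_sum_right: "fa_mul h (\<lambda>w. \<Sum>i\<in>I. F i w) = (\<lambda>w. \<Sum>i\<in>I. fa_mul h (F i) w)"
  unfolding fa_mul_def by (auto simp: fun_eq_iff sum_distrib_left intro: sum.swap)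

lemma fa_expansion:
  assumes "finite U" "{w. f w \<noteq> 0} \<subseteq> U"
  shows "f = (\<lambda>w. \<Sum>u\<in>U. f u * fa_word u w)"
proof
  fix w
  have "(\<Sum>u\<in>U. f u * fa_word u w) = (\<Sum>u\<in>U. if w = u then f w else 0)"
    unfolding fa_word_def by (rule sum.cong) auto
  also have "\<dots> = f w" using assms by (auto simp: sum.delta)
  finally show "f w = (\<Sum>u\<in>U. f u * fa_word u w)" by simp
qed

lemma fa_mul_expansion:
  assumes "finite U" "{w. f w \<noteq> 0} \<subseteq> U" "finite V" "{w. g w \<noteq> 0} \<subseteq> V"
  shows "fa_mul f g = (\<lambda>w. \<Sum>u\<in>U. \<Sum>v\<in>V. f u * g v * fa_word (u @ v) w)"
proof -
  have "fa_mul f g = fa_mul (\<lambda>w. \<Sum>u\<in>U. f u * fa_word u w) (\<lambda>w. \<Sum>v\<in>V. g v * fa_word v w)"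
    using fa_expansion[OF assms(1,2)] fa_expansion[OF assms(3,4)] by metis
  also have "\<dots> = (\<lambda>w. \<Sum>u\<in>U. \<Sum>v\<in>V. f u * g v * fa_word (u @ v) w)"
    by (simp add: fa_mul_sum_left fa_mul_sum_right fa_mul_scale_left fa_mul_scale_right
        fa_mul_word_word mult.assoc)
  finally show ?thesis .
qed

lemma fin_supp_word: "fin_supp (fa_word u)"
  unfolding fin_supp_def fa_word_def by (rule finite_subset[of _ "{u}"]) auto

lemma fin_supp_scaled_one: "fin_supp (\<lambda>w. c * fa_one w)"
  unfolding fin_supp_def fa_one_def by (rule finite_subset[of _ "{[]}"]) auto

context
  fixes q :: "nat \<Rightarrow> nat \<Rightarrow> 'k::field" and m :: nat
begin

lemma qideal_scale: "f \<in> qideal q m \<Longrightarrow> (\<lambda>w. c * f w) \<in> qideal q m"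
  using qideal.lmul[OF _ fin_supp_scaled_one, of f q m c]
  by (simp add: fa_mul_scale_left fa_mul_one_left)

lemma qideal_sum: "(\<And>i. i \<in> A \<Longrightarrow> F i \<in> qideal q m) \<Longrightarrow> (\<lambda>w. \<Sum>i\<in>A. F i w) \<in> qideal q m"
proof (induction A rule: infinite_finite_induct)
  case (insert x A)
  then show ?case using qideal.add[of "F x" q m] by (simp add: fa_add_def)
qed (auto intro: qideal.zero)

lemma qeq_refl: "qeq q m f f"
  unfolding qeq_def fa_diff_def using qideal.zero by simp

lemma qeq_scale: "qeq q m f g \<Longrightarrow> qeq q m (\<lambda>w. c * f w) (\<lambda>w. c * g w)"
  using qideal_scale[of "fa_diff f g" c] unfolding qeq_def fa_diff_def
  by (simp add: right_diff_distrib)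

lemma qeq_sym: "qeq q m f g \<Longrightarrow> qeq q m g f"
  using qideal_scale[of "fa_diff f g" "-1"] unfolding qeq_def fa_diff_def by simp

lemma qeq_trans: "qeq q m f g \<Longrightarrow> qeq q m g h \<Longrightarrow> qeq q m f h"
  using qideal.add unfolding qeq_def fa_diff_def fa_add_def by fastforce

lemma qeq_sum:
  "(\<And>i. i \<in> A \<Longrightarrow> qeq q m (F i) (G i)) \<Longrightarrow> qeq q m (\<lambda>w. \<Sum>i\<in>A. F i w) (\<lambda>w. \<Sum>i\<in>A. G i w)"
  using qideal_sum[of A "\<lambda>i w. F i w - G i w"] unfolding qeq_def fa_diff_def
  by (simp add: sum_subtractf)

lemma qeq_mul_right: "qeq q m f g \<Longrightarrow> fin_supp h \<Longrightarrow> qeq q m (fa_mul f h) (fa_mul g h)"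
  using qideal.rmul[of "fa_diff f g" q m h] unfolding qeq_def fa_diff_def
  by (simp add: fa_mul_diff_left)

lemma qeq_word_append:
  "qeq q m (fa_word u) (\<lambda>w. c * fa_word u' w) \<Longrightarrow> qeq q m (fa_word (u @ v)) (\<lambda>w. c * fa_word (u' @ v) w)"
  using qeq_mul_right[OF _ fin_supp_word, of "fa_word u" "\<lambda>w. c * fa_word u' w" v]
  by (simp only: fa_mul_word_word fa_mul_scale_left)

lemma qeq_word_swap:
  assumes "1 \<le> k" "k < l" "l \<le> m"
  shows "qeq q m (fa_word (u @ [l, k])) (\<lambda>w. q k l * fa_word (u @ [k, l]) w)"
proof -
  have "fa_mul (fa_word u) (qrel q k l) \<in> qideal q m"
    by (rule qideal.lmul[OF qideal.gen[OF assms] fin_supp_word])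
  then show ?thesis
    unfolding qeq_def qrel_def fa_diff_def fa_scale_def
    by (simp add: fa_mul_diff_right fa_mul_scale_right fa_mul_word_word)
qed

text \<open>Moving \<open>t\<^sup>v\<close> to the left of \<open>t\<^sup>u\<close> costs \<open>q\<^sub>k\<^sub>l\<close> for each letter \<open>l\<close> of \<open>u\<close> and each letter
  \<open>k < l\<close> of \<open>v\<close>.\<close>

definition reorder_coeff :: "nat \<Rightarrow> (nat \<Rightarrow> nat) \<Rightarrow> (nat \<Rightarrow> nat) \<Rightarrow> 'k" where
  "reorder_coeff r cu cv = (\<Prod>l\<in>{1..r}. \<Prod>k\<in>{1..<l}. q k l ^ (cv k * cu l))"

definition insertion_coeff :: "(nat \<Rightarrow> nat) \<Rightarrow> nat \<Rightarrow> 'k" where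
  "insertion_coeff cu k = (\<Prod>l\<in>{1..m}. if k \<in> {1..<l} then q k l ^ cu l else 1)"

lemma reorder_coeff_add_left: "reorder_coeff r (\<lambda>x. f x + g x) cv = reorder_coeff r f cv * reorder_coeff r g cv"
  unfolding reorder_coeff_def by (simp add: prod.distrib[symmetric] power_add distrib_left)

lemma reorder_coeff_add_right: "reorder_coeff r cu (\<lambda>x. f x + g x) = reorder_coeff r cu f * reorder_coeff r cu g"
  unfolding reorder_coeff_def by (simp add: prod.distrib[symmetric] power_add distrib_right)

lemma reorder_coeff_zero_right: "reorder_coeff r cu (\<lambda>x. 0) = 1"
  unfolding reorder_coeff_def by simp

lemma reorder_coeff_delta_left:
  "(\<And>k'. k' < k \<Longrightarrow> cv k' = 0) \<Longrightarrow> reorder_coeff r (\<lambda>x. if k = x then 1 else 0) cv = 1"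
  unfolding reorder_coeff_def by (intro prod.neutral ballI) auto

lemma reorder_coeff_0 [simp]: "reorder_coeff 0 cu cv = 1"
  unfolding reorder_coeff_def by simp

lemma reorder_coeff_Suc:
  "reorder_coeff (Suc r) cu cv = reorder_coeff r cu cv * (\<Prod>k\<in>{1..r}. q k (Suc r) ^ (cv k * cu (Suc r)))"
  unfolding reorder_coeff_def by (simp add: prod.cl_ivl_Suc atLeastLessThanSuc_atLeastAtMost)

lemma reorder_coeff_cong:
  "(\<And>k. k \<in> {1..r} \<Longrightarrow> cu k = cu' k) \<Longrightarrow> (\<And>k. k \<in> {1..r} \<Longrightarrow> cv k = cv' k)
    \<Longrightarrow> reorder_coeff r cu cv = reorder_coeff r cu' cv'"
  unfolding reorder_coeff_def by (intro prod.cong refl) auto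

lemma reorder_coeff_delta_right: "reorder_coeff m cu (\<lambda>x. if k = x then 1 else 0) = insertion_coeff cu k"
  unfolding reorder_coeff_def insertion_coeff_def
proof (rule prod.cong[OF refl])
  fix l
  have "(\<Prod>k'\<in>{1..<l}. q k' l ^ ((if k = k' then 1 else 0) * cu l))
      = (\<Prod>k'\<in>{1..<l}. if k' = k then q k l ^ cu l else 1)"
    by (rule prod.cong) auto
  then show "(\<Prod>k'\<in>{1..<l}. q k' l ^ ((if k = k' then 1 else 0) * cu l))
      = (if k \<in> {1..<l} then q k l ^ cu l else 1)"
    by (simp add: prod.delta)
qed

lemma insertion_coeff_snoc:
  assumes "l \<in> {1..m}" "1 \<le> k" "k < l"
  shows "insertion_coeff (count_list (u @ [l])) k = q k l * insertion_coeff (count_list u) k"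
proof -
  have "insertion_coeff (count_list (u @ [l])) k
      = (\<Prod>l'\<in>{1..m}. (if k \<in> {1..<l'} then q k l' ^ count_list u l' else 1) * (if l' = l then q k l else 1))"
    unfolding insertion_coeff_def using assms by (intro prod.cong) auto
  also have "\<dots> = insertion_coeff (count_list u) k * (\<Prod>l'\<in>{1..m}. if l' = l then q k l else 1)"
    unfolding insertion_coeff_def by (rule prod.distrib)
  also have "(\<Prod>l'\<in>{1..m}. if l' = l then q k l else 1) = q k l"
    using assms(1) by (simp add: prod.delta)
  finally show ?thesis by (simp only: mult.commute)
qed

lemma insertion_coeff_sorted_le:
  assumes "\<And>x. x \<in> set u \<Longrightarrow> x \<le> k"
  shows "insertion_coeff (count_list u) k = 1"
  unfolding insertion_coeff_def
proof (intro prod.neutral ballI)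
  fix l assume "l \<in> {1..m}"
  show "(if k \<in> {1..<l} then q k l ^ count_list u l else 1) = 1"
  proof (cases "k < l")
    case True
    then have "l \<notin> set u" using assms by fastforce
    then show ?thesis by (simp add: count_list_0_iff)
  qed simp
qed

text \<open>Bubble the new letter \<open>k\<close> leftwards past every larger letter of the sorted word.\<close>

lemma qeq_word_snoc_sort:
  assumes "u \<in> sorted_words m" "k \<in> {1..m}"
  shows "qeq q m (fa_word (u @ [k])) (\<lambda>w. insertion_coeff (count_list u) k * fa_word (sort (u @ [k])) w)"
  using assms
proof (induction u rule: rev_induct)
  case Nil
  have "insertion_coeff (count_list []) k = 1" by (rule insertion_coeff_sorted_le) simp
  then show ?case unfolding \<open>insertion_coeff (count_list []) k = 1\<close> by (simp add: qeq_refl)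
next
  case (snoc l u)
  have u: "u \<in> sorted_words m" and l: "l \<in> {1..m}" and le: "\<And>x. x \<in> set u \<Longrightarrow> x \<le> l"
    using snoc.prems(1) by (auto simp: sorted_words_def sorted_append)
  show ?case
  proof (cases "k < l")
    case True
    have swap: "qeq q m (fa_word ((u @ [l]) @ [k])) (\<lambda>w. q k l * fa_word (u @ [k, l]) w)"
      using qeq_word_swap[of k l u] True snoc.prems l by simp
    have step: "qeq q m (fa_word (u @ [k, l]))
        (\<lambda>w. insertion_coeff (count_list u) k * fa_word (sort (u @ [k]) @ [l]) w)"
      using qeq_word_append[OF snoc.IH[OF u snoc.prems(2)], of "[l]"] by simp
    have sort: "sort ((u @ [l]) @ [k]) = sort (u @ [k]) @ [l]"
      by (rule properties_for_sort) (use le True in \<open>auto simp: sorted_append\<close>)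
    have coeff: "insertion_coeff (count_list (u @ [l])) k = q k l * insertion_coeff (count_list u) k"
      using insertion_coeff_snoc[OF l _ True] snoc.prems(2) by simp
    show ?thesis unfolding sort coeff mult.assoc by (rule qeq_trans[OF swap qeq_scale[OF step]])
  next
    case False
    have "sorted ((u @ [l]) @ [k])"
      using snoc.prems(1) le False by (fastforce simp: sorted_words_def sorted_append intro: order_trans)
    then have sort: "sort ((u @ [l]) @ [k]) = (u @ [l]) @ [k]" by (rule sorted_sort_id)
    have coeff: "insertion_coeff (count_list (u @ [l])) k = 1"
      using le False by (intro insertion_coeff_sorted_le) fastforce
    show ?thesis unfolding sort coeff mult_1 by (rule qeq_refl)
  qed
qed

lemma qeq_word_append_sort:
  assumes "u \<in> sorted_words m" "v \<in> sorted_words m"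
  shows "qeq q m (fa_word (u @ v))
           (\<lambda>w. reorder_coeff m (count_list u) (count_list v) * fa_word (sort (u @ v)) w)"
  using assms
proof (induction v arbitrary: u)
  case Nil
  then show ?case by (simp add: sorted_words_def sorted_sort_id reorder_coeff_zero_right qeq_refl)
next
  case (Cons k v)
  have k: "k \<in> {1..m}" and v: "v \<in> sorted_words m" and ge: "\<And>x. x \<in> set v \<Longrightarrow> k \<le> x"
    using Cons.prems(2) by (auto simp: sorted_words_def)
  have uk: "sort (u @ [k]) \<in> sorted_words m"
    using Cons.prems(1) k by (simp add: sorted_words_def)
  have "qeq q m (fa_word ((u @ [k]) @ v))
      (\<lambda>w. insertion_coeff (count_list u) k * fa_word (sort (u @ [k]) @ v) w)"
    by (rule qeq_word_append[OF qeq_word_snoc_sort[OF Cons.prems(1) k]])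
  from qeq_trans[OF this qeq_scale[OF Cons.IH[OF uk v]]]
  have step: "qeq q m (fa_word (u @ k # v))
      (\<lambda>w. insertion_coeff (count_list u) k * (reorder_coeff m (count_list (sort (u @ [k]))) (count_list v)
             * fa_word (sort (sort (u @ [k]) @ v)) w))"
    by simp
  have sort: "sort (sort (u @ [k]) @ v) = sort (u @ k # v)"
    by (rule properties_for_sort) simp_all
  have coeff: "insertion_coeff (count_list u) k * reorder_coeff m (count_list (sort (u @ [k]))) (count_list v)
      = reorder_coeff m (count_list u) (count_list (k # v))"
  proof -
    have "count_list (sort (u @ [k])) = (\<lambda>x. count_list u x + (if k = x then 1 else 0))"
      by (simp add: count_list_sort fun_eq_iff)
    moreover have "count_list (k # v) = (\<lambda>x. (if k = x then 1 else 0) + count_list v x)"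
      by (simp add: fun_eq_iff)
    moreover have "reorder_coeff m (\<lambda>x. if k = x then 1 else 0) (count_list v) = 1"
      using ge by (intro reorder_coeff_delta_left) (metis count_notin leD)
    ultimately show ?thesis
      by (simp add: reorder_coeff_add_left reorder_coeff_add_right reorder_coeff_delta_right)
  qed
  show ?case using step unfolding sort mult.assoc[symmetric] coeff .
qed

end

section \<open>Divided powers of a skew derivation\<close>

definition qint :: "'k::field \<Rightarrow> nat \<Rightarrow> 'k" where
  "qint r n = (1 - r ^ n) / (1 - r)"

lemma qfact_0 [simp]: "qfact r 0 = 1"
  unfolding qfact_def by simp

lemma qfact_Suc: "qfact r (Suc n) = qfact r n * qint r (Suc n)"
  unfolding qfact_def qint_def by (simp add: prod.cl_ivl_Suc)

lemma qint_0 [simp]: "qint r 0 = 0"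
  unfolding qint_def by simp

lemma qint_split: "i \<le> n \<Longrightarrow> qint r n = r ^ i * qint r (n - i) + qint r i"
  unfolding qint_def by (simp add: power_add[symmetric] add_divide_distrib[symmetric] algebra_simps)

lemma qint_nonzero: "(\<And>n. n > 0 \<Longrightarrow> r ^ n \<noteq> 1) \<Longrightarrow> n > 0 \<Longrightarrow> qint r n \<noteq> 0"
  unfolding qint_def by (metis divide_eq_0_iff power_one_right right_minus_eq zero_less_one)

locale k_algebra =
  fixes sc :: "'k::field \<Rightarrow> 'a::ring_1 \<Rightarrow> 'a"
  assumes is_algebra: "is_algebra sc"
begin

sublocale vector_space sc
  using is_algebra unfolding is_algebra_def vector_space_def module_def by simp

lemma scale_mult_left: "sc c x * y = sc c (x * y)"
  using is_algebra unfolding is_algebra_def by simp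

lemma scale_mult_right: "x * sc c y = sc c (x * y)"
  using is_algebra unfolding is_algebra_def by metis

lemma linear_map_add: "is_linear_map sc f \<Longrightarrow> f (x + y) = f x + f y"
  unfolding is_linear_map_def by simp

lemma linear_map_scale: "is_linear_map sc f \<Longrightarrow> f (sc c x) = sc c (f x)"
  unfolding is_linear_map_def by simp

lemma linear_map_zero: "is_linear_map sc f \<Longrightarrow> f 0 = 0"
  using linear_map_scale[of f 0 0] by simp

lemma linear_map_sum: "is_linear_map sc f \<Longrightarrow> f (\<Sum>i\<in>I. g i) = (\<Sum>i\<in>I. f (g i))"
  by (induction I rule: infinite_finite_induct) (auto simp: linear_map_zero linear_map_add)

lemma linear_map_id: "is_linear_map sc id"
  unfolding is_linear_map_def by simp

lemma linear_map_comp: "is_linear_map sc f \<Longrightarrow> is_linear_map sc g \<Longrightarrow> is_linear_map sc (f \<circ> g)"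
  unfolding is_linear_map_def by simp

lemma linear_map_funpow: "is_linear_map sc f \<Longrightarrow> is_linear_map sc (f ^^ n)"
  by (induction n) (auto simp: linear_map_id linear_map_comp)

lemma linear_map_scalar: "is_linear_map sc (sc c)"
  unfolding is_linear_map_def by (simp add: scale_right_distrib mult.commute)

lemma funpow_zero_mono:
  "is_linear_map sc f \<Longrightarrow> (f ^^ n) x = 0 \<Longrightarrow> n \<le> n' \<Longrightarrow> (f ^^ n') x = 0"
  by (metis funpow_add le_add_diff_inverse2 comp_apply linear_map_funpow linear_map_zero)

lemma locally_nilpotent_finite_bound:
  assumes "locally_nilpotent f" "is_linear_map sc f" "finite V"
  obtains N where "\<And>v n. v \<in> V \<Longrightarrow> N \<le> n \<Longrightarrow> (f ^^ n) v = 0"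
proof -
  define index where "index v = (SOME n. (f ^^ n) v = 0)" for v
  have index: "(f ^^ index v) v = 0" for v
  proof -
    have "\<exists>n. (f ^^ n) v = 0" using assms(1) unfolding locally_nilpotent_def by blast
    then show ?thesis unfolding index_def by (rule someI_ex)
  qed
  show ?thesis
  proof
    fix v n assume "v \<in> V" "Max (insert 0 (index ` V)) \<le> n"
    moreover have "index v \<le> Max (insert 0 (index ` V))"
      using \<open>v \<in> V\<close> assms(3) by (intro Max_ge) auto
    ultimately show "(f ^^ n) v = 0"
      using funpow_zero_mono[OF assms(2) index] by simp
  qed
qed

definition scaled_commute :: "'k \<Rightarrow> ('a \<Rightarrow> 'a) \<Rightarrow> ('a \<Rightarrow> 'a) \<Rightarrow> bool" where
  "scaled_commute c g f \<longleftrightarrow> (\<forall>x. g (f x) = sc c (f (g x)))"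

lemma scaled_commute_id: "scaled_commute 1 g id"
  unfolding scaled_commute_def by simp

lemma scaled_commute_comp:
  assumes "is_linear_map sc f" "scaled_commute c g f" "scaled_commute c' g f'"
  shows "scaled_commute (c * c') g (f \<circ> f')"
  using assms unfolding scaled_commute_def by (simp add: linear_map_scale)

lemma scaled_commute_funpow_right:
  assumes "is_linear_map sc f" "scaled_commute c g f"
  shows "scaled_commute (c ^ n) g (f ^^ n)"
proof (induction n)
  case 0 then show ?case using scaled_commute_id by (simp add: id_def)
next
  case (Suc n)
  then have "scaled_commute (c * c ^ n) g (f \<circ> f ^^ n)" by (rule scaled_commute_comp[OF assms])
  then show ?case by (simp only: funpow.simps power_Suc)
qed

lemma scaled_commute_funpow_left:
  assumes "is_linear_map sc g" "scaled_commute c g f"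
  shows "scaled_commute (c ^ n) (g ^^ n) f"
proof (induction n)
  case (Suc n)
  then show ?case using assms unfolding scaled_commute_def
    by (simp add: linear_map_scale mult.commute)
qed (simp add: scaled_commute_def)

end

locale q_skew_derivation = k_algebra sc for sc :: "'k::field \<Rightarrow> 'a::ring_1 \<Rightarrow> 'a" +
  fixes phi d :: "'a \<Rightarrow> 'a" and r :: 'k
  assumes phi_linear: "is_linear_map sc phi"
    and phi_one: "phi 1 = 1"
    and skew_derivation: "is_skew_derivation sc phi d"
    and d_phi: "scaled_commute r d phi"
    and not_root_of_unity: "\<And>n. n > 0 \<Longrightarrow> r ^ n \<noteq> 1"
begin

abbreviation dp :: "nat \<Rightarrow> 'a \<Rightarrow> 'a" where
  "dp n \<equiv> divided_power sc r d n"

lemma d_linear: "is_linear_map sc d"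
  using skew_derivation unfolding is_skew_derivation_def by simp

lemma d_mult: "d (x * y) = d x * y + phi x * d y"
  using skew_derivation unfolding is_skew_derivation_def by simp

lemma d_one: "d 1 = 0"
  using d_mult[of 1 1] by (simp add: phi_one)

lemma divided_power_linear: "is_linear_map sc (dp n)"
proof -
  have "dp n = sc (inverse (qfact r n)) \<circ> (d ^^ n)"
    unfolding divided_power_def by auto
  then show ?thesis
    using linear_map_comp[OF linear_map_scalar linear_map_funpow[OF d_linear]] by metis
qed

lemma divided_power_0: "dp 0 x = x"
  unfolding divided_power_def by simp

lemma d_divided_power: "d (dp n x) = sc (qint r (Suc n)) (dp (Suc n) x)"
proof -
  have "sc (qint r (Suc n)) (dp (Suc n) x)
      = sc (qint r (Suc n) * inverse (qfact r n * qint r (Suc n))) (d ((d ^^ n) x))"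
    unfolding divided_power_def by (simp add: qfact_Suc)
  also have "qint r (Suc n) * inverse (qfact r n * qint r (Suc n)) = inverse (qfact r n)"
    using qint_nonzero[OF not_root_of_unity, of "Suc n"] by (simp add: field_simps)
  finally show ?thesis
    by (simp only: divided_power_def[of sc r d n] linear_map_scale[OF d_linear] funpow.simps comp_apply)
qed

lemma divided_power_one: "dp n 1 = (if n = 0 then 1 else 0)"
proof (cases n)
  case (Suc n')
  have "(d ^^ Suc n') 1 = (d ^^ n') (d 1)" by (simp add: funpow_Suc_right del: funpow.simps)
  then show ?thesis
    using Suc by (simp add: divided_power_def d_one linear_map_zero[OF linear_map_funpow[OF d_linear]])
qed (simp add: divided_power_def)

lemma d_leibniz_term:
  "d ((phi ^^ i) (dp (n - i) x) * dp i y)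
     = sc (r ^ i * qint r (Suc n - i)) ((phi ^^ i) (dp (Suc n - i) x) * dp i y)
       + sc (qint r (Suc i)) ((phi ^^ Suc i) (dp (Suc n - Suc i) x) * dp (Suc i) y)"
  if "i \<le> n"
proof -
  have "d ((phi ^^ i) (dp (n - i) x)) = sc (r ^ i) ((phi ^^ i) (d (dp (n - i) x)))"
    using scaled_commute_funpow_right[OF phi_linear d_phi] unfolding scaled_commute_def by simp
  moreover have "d (dp (n - i) x) = sc (qint r (Suc n - i)) (dp (Suc n - i) x)"
    using d_divided_power that by (simp add: Suc_diff_le)
  ultimately show ?thesis
    by (simp add: d_mult d_divided_power linear_map_scale[OF linear_map_funpow[OF phi_linear]]
        scale_mult_left scale_mult_right mult.commute Suc_diff_le[OF that])
qed

text \<open>The two sums produced by \<open>d_leibniz_term\<close> recombine by \<open>qint_split\<close>.\<close>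

lemma divided_power_leibniz: "dp n (x * y) = (\<Sum>i\<le>n. (phi ^^ i) (dp (n - i) x) * dp i y)"
proof (induction n)
  case 0 then show ?case by (simp add: divided_power_0)
next
  case (Suc n)
  define T where "T i = (phi ^^ i) (dp (Suc n - i) x) * dp i y" for i
  have "sc (qint r (Suc n)) (dp (Suc n) (x * y)) = d (dp n (x * y))"
    by (simp add: d_divided_power)
  also have "\<dots> = (\<Sum>i\<le>n. d ((phi ^^ i) (dp (n - i) x) * dp i y))"
    using Suc by (simp add: linear_map_sum[OF d_linear])
  also have "\<dots> = (\<Sum>i\<le>n. sc (r ^ i * qint r (Suc n - i)) (T i)) + (\<Sum>i\<le>n. sc (qint r (Suc i)) (T (Suc i)))"
    unfolding T_def by (simp add: d_leibniz_term sum.distrib)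
  also have "\<dots> = (\<Sum>i\<le>Suc n. sc (r ^ i * qint r (Suc n - i)) (T i)) + (\<Sum>i\<le>Suc n. sc (qint r i) (T i))"
    using sum.atMost_Suc_shift[of "\<lambda>i. sc (qint r i) (T i)" n] by simp
  also have "\<dots> = (\<Sum>i\<le>Suc n. sc (qint r (Suc n)) (T i))"
    unfolding sum.distrib[symmetric]
    by (rule sum.cong) (simp_all add: qint_split[of _ "Suc n" r] scale_left_distrib[symmetric])
  also have "\<dots> = sc (qint r (Suc n)) (\<Sum>i\<le>Suc n. T i)"
    by (rule scale_sum_right[symmetric])
  finally have "sc (qint r (Suc n)) (dp (Suc n) (x * y)) = sc (qint r (Suc n)) (\<Sum>i\<le>Suc n. T i)" .
  then show ?case
    using qint_nonzero[OF not_root_of_unity, of "Suc n"] unfolding T_def by simp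
qed

end

section \<open>The multi-index Leibniz rule\<close>

locale skew_derivation_family = k_algebra sc for sc :: "'k::field \<Rightarrow> 'a::ring_1 \<Rightarrow> 'a" +
  fixes m :: nat
    and phi D :: "nat \<Rightarrow> 'a \<Rightarrow> 'a"
    and q :: "nat \<Rightarrow> nat \<Rightarrow> 'k"
    and eps :: "'a \<Rightarrow> 'k"
  assumes automorphism: "\<And>k. k \<in> {1..m} \<Longrightarrow> is_algebra_automorphism sc (phi k)"
    and skew_derivation: "\<And>k. k \<in> {1..m} \<Longrightarrow> is_skew_derivation sc (phi k) (D k)"
    and locally_nilpotent_D: "\<And>k. k \<in> {1..m} \<Longrightarrow> locally_nilpotent (D k)"
    and D_phi: "\<And>k l x. k \<in> {1..m} \<Longrightarrow> l \<in> {1..m} \<Longrightarrow>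
                 D l (phi k x) = sc (q k l) (phi k (D l x))"
    and not_root_of_unity: "\<And>k n. k \<in> {1..m} \<Longrightarrow> n > 0 \<Longrightarrow> q k k ^ n \<noteq> 1"
    and eps_hom: "is_algebra_hom_to_field sc eps"
    and eps_phi: "\<And>k x. k \<in> {1..m} \<Longrightarrow> eps (phi k x) = eps x"
begin

lemma scaled_commute_D_phi: "k \<in> {1..m} \<Longrightarrow> l \<in> {1..m} \<Longrightarrow> scaled_commute (q k l) (D l) (phi k)"
  unfolding scaled_commute_def by (simp add: D_phi)

lemma q_skew_derivation_at: "k \<in> {1..m} \<Longrightarrow> q_skew_derivation sc (phi k) (D k) (q k k)"
  using automorphism skew_derivation not_root_of_unity scaled_commute_D_phi is_algebra
  unfolding q_skew_derivation_def q_skew_derivation_axioms_def k_algebra_def is_algebra_automorphism_def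
  by blast

lemma phi_linear_at: "k \<in> {1..m} \<Longrightarrow> is_linear_map sc (phi k)"
  using q_skew_derivation.phi_linear[OF q_skew_derivation_at] .

lemma D_linear_at: "k \<in> {1..m} \<Longrightarrow> is_linear_map sc (D k)"
  using q_skew_derivation.d_linear[OF q_skew_derivation_at] .

lemma divided_power_linear_at:
  "k \<in> {1..m} \<Longrightarrow> is_linear_map sc (divided_power sc (q k k) (D k) n)"
  using q_skew_derivation.divided_power_linear[OF q_skew_derivation_at] .

lemma eps_add: "eps (x + y) = eps x + eps y"
  using eps_hom unfolding is_algebra_hom_to_field_def by simp

lemma eps_scale: "eps (sc c x) = c * eps x"
  using eps_hom unfolding is_algebra_hom_to_field_def by simp

lemma eps_mult: "eps (x * y) = eps x * eps y"
  using eps_hom unfolding is_algebra_hom_to_field_def by simp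

lemma eps_zero: "eps 0 = 0"
  using eps_scale[of 0 0] by simp

lemma eps_sum: "eps (\<Sum>i\<in>I. g i) = (\<Sum>i\<in>I. eps (g i))"
  by (induction I rule: infinite_finite_induct) (auto simp: eps_zero eps_add)

abbreviation iterD :: "nat \<Rightarrow> (nat \<Rightarrow> nat) \<Rightarrow> 'a \<Rightarrow> 'a" where
  "iterD r a \<equiv> iter_divided sc q D r a"

lemma iterD_0: "iterD 0 a x = x"
  unfolding iter_divided_def by simp

lemma iterD_Suc:
  "iterD (Suc r) a x = divided_power sc (q (Suc r) (Suc r)) (D (Suc r)) (a (Suc r)) (iterD r a x)"
  unfolding iter_divided_def by simp

lemma iterD_cong: "(\<And>k. k \<in> {1..r} \<Longrightarrow> a k = a' k) \<Longrightarrow> iterD r a x = iterD r a' x"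
  by (induction r) (auto simp: iterD_0 iterD_Suc)

lemma iterD_linear: "r \<le> m \<Longrightarrow> is_linear_map sc (iterD r a)"
proof (induction r)
  case 0 then show ?case using linear_map_id by (simp add: iterD_0 id_def)
next
  case (Suc r)
  have "iterD (Suc r) a = divided_power sc (q (Suc r) (Suc r)) (D (Suc r)) (a (Suc r)) \<circ> iterD r a"
    by (auto simp: iterD_Suc)
  show ?case
    unfolding \<open>iterD (Suc r) a = _\<close>
    by (rule linear_map_comp[OF divided_power_linear_at Suc.IH]) (use Suc.prems in simp_all)
qed

definition phi_pow :: "nat \<Rightarrow> (nat \<Rightarrow> nat) \<Rightarrow> 'a \<Rightarrow> 'a" where
  "phi_pow r j = fold (\<lambda>k. phi k ^^ j k) [1..<Suc r]"

lemma phi_pow_0: "phi_pow 0 j = id"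
  unfolding phi_pow_def by simp

lemma phi_pow_Suc: "phi_pow (Suc r) j = (phi (Suc r) ^^ j (Suc r)) \<circ> phi_pow r j"
  unfolding phi_pow_def by simp

lemma phi_pow_cong: "(\<And>k. k \<in> {1..r} \<Longrightarrow> j k = j' k) \<Longrightarrow> phi_pow r j = phi_pow r j'"
  by (induction r) (auto simp: phi_pow_0 phi_pow_Suc)

lemma phi_pow_linear: "r \<le> m \<Longrightarrow> is_linear_map sc (phi_pow r j)"
  by (induction r) (auto simp: phi_pow_0 phi_pow_Suc linear_map_id linear_map_comp
      linear_map_funpow phi_linear_at)

lemma eps_phi_pow: "r \<le> m \<Longrightarrow> eps (phi_pow r j x) = eps x"
proof (induction r)
  case (Suc r)
  have "eps ((phi (Suc r) ^^ n) y) = eps y" for n y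
    using Suc.prems by (induction n) (auto simp: eps_phi)
  then show ?case using Suc by (simp add: phi_pow_Suc)
qed (simp add: phi_pow_0)

lemma scaled_commute_D_phi_pow:
  "r < l \<Longrightarrow> l \<le> m \<Longrightarrow> scaled_commute (\<Prod>k\<in>{1..r}. q k l ^ j k) (D l) (phi_pow r j)"
proof (induction r)
  case 0 then show ?case by (simp add: phi_pow_0 scaled_commute_def)
next
  case (Suc r)
  have "scaled_commute (q (Suc r) l ^ j (Suc r)) (D l) (phi (Suc r) ^^ j (Suc r))"
    using Suc.prems by (intro scaled_commute_funpow_right phi_linear_at scaled_commute_D_phi) auto
  from scaled_commute_comp[OF _ this Suc.IH] Suc.prems
  have "scaled_commute (q (Suc r) l ^ j (Suc r) * (\<Prod>k\<in>{1..r}. q k l ^ j k)) (D l) (phi_pow (Suc r) j)"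
    unfolding phi_pow_Suc by (simp add: linear_map_funpow phi_linear_at)
  then show ?case by (simp add: prod.cl_ivl_Suc mult.commute)
qed

lemma divided_power_phi_pow:
  assumes "r < l" "l \<le> m"
  shows "divided_power sc (q l l) (D l) n (phi_pow r j x)
           = sc (\<Prod>k\<in>{1..r}. q k l ^ (j k * n)) (phi_pow r j (divided_power sc (q l l) (D l) n x))"
proof -
  have "scaled_commute ((\<Prod>k\<in>{1..r}. q k l ^ j k) ^ n) (D l ^^ n) (phi_pow r j)"
    using assms by (intro scaled_commute_funpow_left D_linear_at scaled_commute_D_phi_pow) auto
  moreover have "(\<Prod>k\<in>{1..r}. q k l ^ j k) ^ n = (\<Prod>k\<in>{1..r}. q k l ^ (j k * n))"
    by (simp add: prod_power_distrib power_mult)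
  ultimately show ?thesis
    using assms unfolding divided_power_def scaled_commute_def
    by (simp add: linear_map_scale[OF phi_pow_linear] mult.commute)
qed

lemma iterD_mult_term:
  fixes r i :: nat and j a :: "nat \<Rightarrow> nat"
  defines "s \<equiv> Suc r" and "j' \<equiv> j(Suc r := i)"
  assumes "s \<le> m"
  shows "sc (reorder_coeff q r (\<lambda>k. a k - j k) j)
           ((phi s ^^ i) (divided_power sc (q s s) (D s) (a s - i) (phi_pow r j (iterD r (\<lambda>k. a k - j k) x)))
            * divided_power sc (q s s) (D s) i (iterD r j y))
       = sc (reorder_coeff q s (\<lambda>k. a k - j' k) j')
           (phi_pow s j' (iterD s (\<lambda>k. a k - j' k) x) * iterD s j' y)"
proof -
  let ?dp = "divided_power sc (q s s) (D s)"
  let ?c = "\<Prod>k\<in>{1..r}. q k s ^ (j k * (a s - i))"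
  have agree: "\<And>k. k \<in> {1..r} \<Longrightarrow> j' k = j k" unfolding j'_def by auto
  have "phi_pow s j' z = (phi s ^^ i) (phi_pow r j z)" for z
    using phi_pow_cong[of r j' j] agree by (simp add: s_def j'_def phi_pow_Suc)
  moreover have "iterD s (\<lambda>k. a k - j' k) x = ?dp (a s - i) (iterD r (\<lambda>k. a k - j k) x)"
    using iterD_cong[of r "\<lambda>k. a k - j' k" "\<lambda>k. a k - j k"] agree
    by (simp add: s_def j'_def iterD_Suc)
  moreover have "iterD s j' y = ?dp i (iterD r j y)"
    using iterD_cong[of r j' j] agree by (simp add: s_def j'_def iterD_Suc)
  moreover have "reorder_coeff q s (\<lambda>k. a k - j' k) j' = reorder_coeff q r (\<lambda>k. a k - j k) j * ?c"
  proof -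
    have "reorder_coeff q r (\<lambda>k. a k - j' k) j' = reorder_coeff q r (\<lambda>k. a k - j k) j"
      by (rule reorder_coeff_cong) (simp_all add: agree)
    moreover have "(\<Prod>k\<in>{1..r}. q k s ^ (j' k * (a s - j' s))) = ?c"
      by (rule prod.cong) (simp_all add: agree j'_def s_def)
    ultimately show ?thesis by (simp only: s_def reorder_coeff_Suc)
  qed
  moreover have "?dp (a s - i) (phi_pow r j z) = sc ?c (phi_pow r j (?dp (a s - i) z))" for z
    using assms by (intro divided_power_phi_pow) (auto simp: s_def)
  ultimately show ?thesis
    using assms by (simp add: linear_map_scale[OF linear_map_funpow[OF phi_linear_at]] scale_mult_left)
qed

lemma iterD_mult:
  "r \<le> m \<Longrightarrow> iterD r a (x * y) =
     (\<Sum>j\<in>exponents_le r a. sc (reorder_coeff q r (\<lambda>k. a k - j k) j)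
        (phi_pow r j (iterD r (\<lambda>k. a k - j k) x) * iterD r j y))"
proof (induction r)
  case 0 then show ?case by (simp add: exponents_le_0 iterD_0 phi_pow_0)
next
  case (Suc r)
  define s where "s = Suc r"
  have s: "s \<in> {1..m}" using Suc.prems s_def by auto
  let ?dp = "divided_power sc (q s s) (D s)"
  let ?F = "\<lambda>j'. sc (reorder_coeff q s (\<lambda>k. a k - j' k) j')
                  (phi_pow s j' (iterD s (\<lambda>k. a k - j' k) x) * iterD s j' y)"
  have "iterD s a (x * y) = ?dp (a s) (iterD r a (x * y))"
    by (simp add: s_def iterD_Suc)
  also have "\<dots> = (\<Sum>j\<in>exponents_le r a. sc (reorder_coeff q r (\<lambda>k. a k - j k) j)
      (?dp (a s) (phi_pow r j (iterD r (\<lambda>k. a k - j k) x) * iterD r j y)))"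
    using Suc by (simp add: linear_map_sum[OF divided_power_linear_at[OF s]]
        linear_map_scale[OF divided_power_linear_at[OF s]])
  also have "\<dots> = (\<Sum>j\<in>exponents_le r a. \<Sum>i\<le>a s. ?F (j(s := i)))"
    using Suc.prems iterD_mult_term[of r] unfolding s_def
    by (simp add: q_skew_derivation.divided_power_leibniz[OF q_skew_derivation_at[OF s[unfolded s_def]]]
        scale_sum_right)
  also have "\<dots> = (\<Sum>p\<in>exponents_le r a \<times> {..a s}. ?F ((\<lambda>(j, i). j(s := i)) p))"
    by (simp add: sum.cartesian_product split_def)
  also have "\<dots> = (\<Sum>j'\<in>exponents_le s a. ?F j')"
    unfolding s_def exponents_le_Suc
    by (rule sum.reindex[OF inj_on_exponents_le_Suc, symmetric, unfolded comp_def])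
  finally show ?case by (simp add: s_def)
qed

lemma eps_iterD_mult:
  "eps (iterD m a (x * y)) =
     (\<Sum>j\<in>exponents_le m a. reorder_coeff q m (\<lambda>k. a k - j k) j
        * eps (iterD m (\<lambda>k. a k - j k) x) * eps (iterD m j y))"
  by (simp add: iterD_mult eps_sum eps_scale eps_mult eps_phi_pow mult.assoc)

text \<open>Only finitely many vectors \<open>\<partial>\<^sub>1\<^bsup>(a\<^sub>1)\<^esup> \<dots> \<partial>\<^sub>r\<^bsup>(a\<^sub>r)\<^esup> x\<close> with small exponents occur, so a single
  power of \<open>\<partial>\<^sub>r\<^sub>+\<^sub>1\<close> kills all of them.\<close>

lemma iterD_eventually_zero: "r \<le> m \<Longrightarrow> \<exists>N. \<forall>a. (\<exists>k\<in>{1..r}. N \<le> a k) \<longrightarrow> iterD r a x = 0"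
proof (induction r)
  case 0 then show ?case by auto
next
  case (Suc r)
  define s where "s = Suc r"
  have s: "s \<in> {1..m}" using Suc.prems s_def by auto
  obtain N where N: "\<And>a. \<exists>k\<in>{1..r}. N \<le> a k \<Longrightarrow> iterD r a x = 0"
    using Suc by auto
  define V where "V = (\<lambda>a. iterD r a x) ` exponents_le r (\<lambda>_. N)"
  have "finite V" unfolding V_def by (simp add: finite_exponents_le)
  then obtain N' where N': "\<And>v n. v \<in> V \<Longrightarrow> N' \<le> n \<Longrightarrow> (D s ^^ n) v = 0"
    using locally_nilpotent_finite_bound[OF locally_nilpotent_D[OF s] D_linear_at[OF s]] by blast
  have zero: "iterD s a x = 0" if k: "k \<in> {1..s}" "max N N' \<le> a k" for a k
  proof (cases "\<exists>k\<in>{1..r}. N \<le> a k")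
    case True
    then show ?thesis
      using N linear_map_zero[OF divided_power_linear_at[OF s]] by (simp add: s_def iterD_Suc)
  next
    case False
    define a0 where "a0 k = (if k \<in> {1..r} then a k else 0)" for k
    have "a0 \<in> exponents_le r (\<lambda>_. N)"
      using False unfolding a0_def exponents_le_def by (simp add: not_le less_imp_le)
    moreover have "iterD r a x = iterD r a0 x" by (rule iterD_cong) (simp add: a0_def)
    ultimately have "iterD r a x \<in> V" unfolding V_def by auto
    moreover have "k = s"
    proof (rule ccontr)
      assume "k \<noteq> s"
      then have "k \<in> {1..r}" using k(1) s_def by auto
      then show False using False k(2) by auto
    qed
    ultimately have "(D s ^^ a s) (iterD r a x) = 0" using N' k(2) by simp
    then show ?thesis by (simp add: s_def iterD_Suc divided_power_def)
  qed
  show ?case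
  proof (intro exI allI impI)
    fix a assume "\<exists>k\<in>{1..Suc r}. max N N' \<le> a k"
    then show "iterD (Suc r) a x = 0" using zero unfolding s_def by blast
  qed
qed

end

section \<open>The homomorphism \<open>\<Phi>\<close>\<close>

definition sorted_splits :: "nat \<Rightarrow> nat list \<Rightarrow> (nat list \<times> nat list) set" where
  "sorted_splits m s = {(u, v). u \<in> sorted_words m \<and> v \<in> sorted_words m \<and> sort (u @ v) = s}"

lemma finite_sorted_splits: "finite (sorted_splits m s)"
proof -
  let ?W = "{w. set w \<subseteq> {1..m} \<and> length w \<le> length s}"
  have "sorted_splits m s \<subseteq> ?W \<times> ?W"
  proof
    fix p assume p: "p \<in> sorted_splits m s"
    obtain u v where uv: "p = (u, v)" by fastforce
    have "set u \<subseteq> {1..m}" "set v \<subseteq> {1..m}" "length (u @ v) = length s"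
      using p unfolding uv sorted_splits_def sorted_words_def by (auto simp del: length_append)
    then show "p \<in> ?W \<times> ?W" using uv by simp
  qed
  then show ?thesis
    using finite_lists_length_le[of "{1..m}" "length s"] by (auto intro: finite_subset)
qed

text \<open>Splitting a monomial \<open>t\<^sup>a\<close> into two monomials amounts to choosing an exponent vector \<open>j \<le> a\<close>.\<close>

lemma sum_sorted_splits:
  assumes "s \<in> sorted_words m"
  shows "(\<Sum>(u, v)\<in>sorted_splits m s. G (count_list u) (count_list v))
       = (\<Sum>j\<in>exponents_le m (count_list s). G (\<lambda>k. count_list s k - j k) j)"
proof (rule sum.reindex_bij_witness[where j = "\<lambda>(u, v). count_list v"
      and i = "\<lambda>j. (monomial_word m (\<lambda>k. count_list s k - j k), monomial_word m j)"])
  fix p assume p: "p \<in> sorted_splits m s"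
  obtain u v where uv: "p = (u, v)" "u \<in> sorted_words m" "v \<in> sorted_words m" "sort (u @ v) = s"
    using p unfolding sorted_splits_def by auto
  have count: "count_list s k = count_list u k + count_list v k" for k
    using count_list_sort[of "u @ v" k] uv(4) by simp
  then have u: "(\<lambda>k. count_list s k - count_list v k) = count_list u" by auto
  show "(\<lambda>j. (monomial_word m (\<lambda>k. count_list s k - j k), monomial_word m j)) ((\<lambda>(u, v). count_list v) p) = p"
    using uv by (simp add: u monomial_word_count_list)
  show "(\<lambda>(u, v). count_list v) p \<in> exponents_le m (count_list s)"
    using uv count unfolding exponents_le_def sorted_words_def by (auto simp: count_list_0_iff)
  show "G (\<lambda>k. count_list s k - (\<lambda>(u, v). count_list v) p k) ((\<lambda>(u, v). count_list v) p)
      = (case p of (u, v) \<Rightarrow> G (count_list u) (count_list v))"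
    using uv by (simp add: u)
next
  fix j assume j: "j \<in> exponents_le m (count_list s)"
  then show "(\<lambda>(u, v). count_list v) (monomial_word m (\<lambda>k. count_list s k - j k), monomial_word m j) = j"
    unfolding exponents_le_def by (auto simp: fun_eq_iff count_list_monomial_word)
  have "sort (monomial_word m (\<lambda>k. count_list s k - j k) @ monomial_word m j) = s"
  proof (rule properties_for_sort)
    show "mset s = mset (monomial_word m (\<lambda>k. count_list s k - j k) @ monomial_word m j)"
      using assms j unfolding exponents_le_def sorted_words_def
      by (intro mset_eq_if_count_list_eq) (auto simp: count_list_monomial_word count_list_0_iff)
  qed (use assms in \<open>simp add: sorted_words_def\<close>)
  then show "(monomial_word m (\<lambda>k. count_list s k - j k), monomial_word m j) \<in> sorted_splits m s"
    unfolding sorted_splits_def by (simp add: monomial_word_in_sorted_words)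
qed

context skew_derivation_family
begin

abbreviation \<Phi> :: "'a \<Rightarrow> nat list \<Rightarrow> 'k" where
  "\<Phi> x \<equiv> Phi sc q D eps m x"

lemma Phi_eq: "\<Phi> x w = (if w \<in> sorted_words m then eps (iterD m (count_list w) x) else 0)"
  unfolding Phi_def sorted_words_def by simp

lemma Phi_nonzero_sorted: "\<Phi> x w \<noteq> 0 \<Longrightarrow> w \<in> sorted_words m"
  by (auto simp: Phi_eq split: if_splits)

lemma fin_supp_Phi: "fin_supp (\<Phi> x)"
proof -
  obtain N where N: "\<And>a. \<exists>k\<in>{1..m}. N \<le> a k \<Longrightarrow> iterD m a x = 0"
    using iterD_eventually_zero[of m x] by auto
  have "set w \<subseteq> {1..m} \<and> length w \<le> m * N" if "\<Phi> x w \<noteq> 0" for w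
  proof -
    have w: "set w \<subseteq> {1..m}" and nonzero: "iterD m (count_list w) x \<noteq> 0"
      using that by (auto simp: Phi_eq sorted_words_def eps_zero split: if_splits)
    then have "count_list w k \<le> N" if "k \<in> {1..m}" for k
      using N[of "count_list w"] that by (meson nat_le_linear)
    then have "length w \<le> (\<Sum>k\<in>{1..m}. N)"
      using sum_count_set[OF w] sum_mono[of "{1..m}" "count_list w" "\<lambda>_. N"] by simp
    then show ?thesis using w by simp
  qed
  then have "{w. \<Phi> x w \<noteq> 0} \<subseteq> {w. set w \<subseteq> {1..m} \<and> length w \<le> m * N}" by blast
  then show ?thesis
    unfolding fin_supp_def using finite_lists_length_le[of "{1..m}"] by (auto intro: finite_subset)
qed

lemma iterD_one: "r \<le> m \<Longrightarrow> iterD r a 1 = (if \<forall>k\<in>{1..r}. a k = 0 then 1 else 0)"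
proof (induction r)
  case 0 then show ?case by (simp add: iterD_0)
next
  case (Suc r)
  have s: "Suc r \<in> {1..m}" using Suc.prems by auto
  have "(\<forall>k\<in>{1..Suc r}. a k = 0) \<longleftrightarrow> (\<forall>k\<in>{1..r}. a k = 0) \<and> a (Suc r) = 0"
    by (auto simp: le_Suc_eq)
  then show ?case
    using Suc q_skew_derivation.divided_power_one[OF q_skew_derivation_at[OF s]]
      linear_map_zero[OF divided_power_linear_at[OF s]]
    by (simp add: iterD_Suc)
qed

lemma Phi_one: "\<Phi> 1 = fa_one"
proof
  fix w
  have "eps 1 = 1" using eps_hom unfolding is_algebra_hom_to_field_def by simp
  moreover have "(\<forall>k\<in>{1..m}. count_list w k = 0) \<longleftrightarrow> w = []" if "set w \<subseteq> {1..m}"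
    using that by (auto simp: count_list_0_iff) (metis list.set_intros(1) neq_Nil_conv subsetD)
  ultimately show "\<Phi> 1 w = fa_one w"
    by (auto simp: Phi_eq sorted_words_def iterD_one fa_one_def eps_zero)
qed

lemma Phi_add: "\<Phi> (x + y) = fa_add (\<Phi> x) (\<Phi> y)"
  by (simp add: fun_eq_iff fa_add_def Phi_eq linear_map_add[OF iterD_linear] eps_add)

lemma Phi_scale: "\<Phi> (sc c x) = fa_scale c (\<Phi> x)"
  by (simp add: fun_eq_iff fa_scale_def Phi_eq linear_map_scale[OF iterD_linear] eps_scale)

text \<open>Reordering \<open>\<Phi> x \<cdot> \<Phi> y\<close> into normal form produces exactly the coefficients of the
  multi-index Leibniz rule.\<close>

lemma Phi_mult_coeff:
  assumes U: "finite U" "{w. \<Phi> x w \<noteq> 0} \<subseteq> U" "U \<subseteq> sorted_words m"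
    and V: "finite V" "{w. \<Phi> y w \<noteq> 0} \<subseteq> V" "V \<subseteq> sorted_words m"
  shows "(\<Sum>u\<in>U. \<Sum>v\<in>V. \<Phi> x u * \<Phi> y v
            * (reorder_coeff q m (count_list u) (count_list v) * fa_word (sort (u @ v)) s))
       = \<Phi> (x * y) s"
proof -
  define G where "G = (\<lambda>(u, v). \<Phi> x u * \<Phi> y v * reorder_coeff q m (count_list u) (count_list v))"
  have "(\<Sum>u\<in>U. \<Sum>v\<in>V. \<Phi> x u * \<Phi> y v
            * (reorder_coeff q m (count_list u) (count_list v) * fa_word (sort (u @ v)) s))
      = (\<Sum>p\<in>U \<times> V. if sort (fst p @ snd p) = s then G p else 0)"
    unfolding sum.cartesian_product G_def fa_word_def by (rule sum.cong) auto
  also have "\<dots> = (\<Sum>p\<in>{p \<in> U \<times> V. sort (fst p @ snd p) = s}. G p)"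
    using U V by (simp add: sum.inter_filter)
  finally have lhs: "(\<Sum>u\<in>U. \<Sum>v\<in>V. \<Phi> x u * \<Phi> y v
            * (reorder_coeff q m (count_list u) (count_list v) * fa_word (sort (u @ v)) s))
      = (\<Sum>p\<in>{p \<in> U \<times> V. sort (fst p @ snd p) = s}. G p)" .
  show ?thesis
  proof (cases "s \<in> sorted_words m")
    case False
    then have empty: "{p \<in> U \<times> V. sort (fst p @ snd p) = s} = {}"
      using sort_append_sorted_words U(3) V(3) by fastforce
    show ?thesis unfolding lhs empty using False by (simp add: Phi_eq)
  next
    case True
    have "(\<Sum>p\<in>{p \<in> U \<times> V. sort (fst p @ snd p) = s}. G p) = (\<Sum>p\<in>sorted_splits m s. G p)"
    proof (rule sum.mono_neutral_left[OF finite_sorted_splits])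
      show "{p \<in> U \<times> V. sort (fst p @ snd p) = s} \<subseteq> sorted_splits m s"
        using U(3) V(3) unfolding sorted_splits_def by auto
      show "\<forall>p\<in>sorted_splits m s - {p \<in> U \<times> V. sort (fst p @ snd p) = s}. G p = 0"
        using U(2) V(2) unfolding sorted_splits_def G_def by auto
    qed
    also have "\<dots> = (\<Sum>(u, v)\<in>sorted_splits m s. reorder_coeff q m (count_list u) (count_list v)
        * eps (iterD m (count_list u) x) * eps (iterD m (count_list v) y))"
      unfolding G_def sorted_splits_def by (rule sum.cong) (auto simp: Phi_eq)
    also have "\<dots> = (\<Sum>j\<in>exponents_le m (count_list s). reorder_coeff q m (\<lambda>k. count_list s k - j k) j
        * eps (iterD m (\<lambda>k. count_list s k - j k) x) * eps (iterD m j y))"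
      by (rule sum_sorted_splits[OF True])
    also have "\<dots> = \<Phi> (x * y) s"
      using True by (simp add: Phi_eq eps_iterD_mult)
    finally show ?thesis by (simp add: lhs)
  qed
qed

lemma Phi_mult: "qeq q m (\<Phi> (x * y)) (fa_mul (\<Phi> x) (\<Phi> y))"
proof -
  define U where "U = {w. \<Phi> x w \<noteq> 0}"
  define V where "V = {w. \<Phi> y w \<noteq> 0}"
  have U: "finite U" "{w. \<Phi> x w \<noteq> 0} \<subseteq> U" "U \<subseteq> sorted_words m"
    using fin_supp_Phi[of x] Phi_nonzero_sorted unfolding U_def fin_supp_def by auto
  have V: "finite V" "{w. \<Phi> y w \<noteq> 0} \<subseteq> V" "V \<subseteq> sorted_words m"
    using fin_supp_Phi[of y] Phi_nonzero_sorted unfolding V_def fin_supp_def by auto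
  have "fa_mul (\<Phi> x) (\<Phi> y) = (\<lambda>w. \<Sum>u\<in>U. \<Sum>v\<in>V. \<Phi> x u * \<Phi> y v * fa_word (u @ v) w)"
    by (rule fa_mul_expansion[OF U(1,2) V(1,2)])
  moreover have "qeq q m (\<lambda>w. \<Sum>u\<in>U. \<Sum>v\<in>V. \<Phi> x u * \<Phi> y v * fa_word (u @ v) w)
      (\<lambda>w. \<Sum>u\<in>U. \<Sum>v\<in>V. \<Phi> x u * \<Phi> y v
           * (reorder_coeff q m (count_list u) (count_list v) * fa_word (sort (u @ v)) w))"
    using U(3) V(3) by (intro qeq_sum qeq_scale qeq_word_append_sort) auto
  ultimately show ?thesis
    using Phi_mult_coeff[OF U V] by (simp add: qeq_sym)
qed

end

theorem mainTheorem13: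
  fixes sc :: "'k::field \<Rightarrow> 'a::ring_1_no_zero_divisors \<Rightarrow> 'a"
    and m :: nat
    and phi D :: "nat \<Rightarrow> 'a \<Rightarrow> 'a"
    and q :: "nat \<Rightarrow> nat \<Rightarrow> 'k"
    and eps :: "'a \<Rightarrow> 'k"
  assumes alg: "is_algebra sc"
    and aut: "\<And>k. k \<in> {1..m} \<Longrightarrow> is_algebra_automorphism sc (phi k)"
    and der: "\<And>k. k \<in> {1..m} \<Longrightarrow> is_skew_derivation sc (phi k) (D k)"
    and lnil: "\<And>k. k \<in> {1..m} \<Longrightarrow> locally_nilpotent (D k)"
    and comm: "\<And>k l x. k \<in> {1..m} \<Longrightarrow> l \<in> {1..m} \<Longrightarrow>
                 D l (phi k x) = sc (q k l) (phi k (D l x))"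
    and qunit: "\<And>k l. k \<in> {1..m} \<Longrightarrow> l \<in> {1..m} \<Longrightarrow> q k l \<noteq> 0"
    and qroot: "\<And>k n. k \<in> {1..m} \<Longrightarrow> n > 0 \<Longrightarrow> q k k ^ n \<noteq> 1"
    and eps_hom: "is_algebra_hom_to_field sc eps"
    and eps_phi: "\<And>k x. k \<in> {1..m} \<Longrightarrow> eps (phi k x) = eps x"
  shows "(\<forall>x. fin_supp (Phi sc q D eps m x))
       \<and> qeq q m (Phi sc q D eps m 1) fa_one
       \<and> (\<forall>x y. qeq q m (Phi sc q D eps m (x + y)) (fa_add (Phi sc q D eps m x) (Phi sc q D eps m y)))
       \<and> (\<forall>c x. qeq q m (Phi sc q D eps m (sc c x)) (fa_scale c (Phi sc q D eps m x)))
       \<and> (\<forall>x y. qeq q m (Phi sc q D eps m (x * y)) (fa_mul (Phi sc q D eps m x) (Phi sc q D eps m y)))"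
proof -
  interpret skew_derivation_family sc m phi D q eps
    by unfold_locales (use assms in \<open>auto simp: k_algebra_def\<close>)
  show ?thesis by (simp add: fin_supp_Phi Phi_one Phi_add Phi_scale Phi_mult qeq_refl)
qed

end
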